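(* Let $q$ be a prime power and let $\mathcal{P}$ be a monic irreducible polynomial in $\mathbb{F}_q[T]$ of degree $m$. Then for every $n\in\mathbb{Z}_{\geqslant1}$, $\mathcal{P}$ is a c-Wieferich prime in $\mathbb{F}_q[T]$ if and only if $\mathcal{P}$ is a c-Wieferich prime in $\mathbb{F}_{q^{mn+1}}[T]$.
   Context: For a prime power $Q$, the Carlitz module over $\mathbb{F}_Q[T]$: for $N\in\mathbb{F}_Q[T]$, $\rho_N(X)$ is the additive polynomial determined by requiring $N\mapsto\rho_N$ to be an $\mathbb{F}_Q$-algebra homomorphism into additive polynomials (multiplication = composition) with $\rho_T(X)=X^Q+TX$. A monic irreducible $\mathcal{P}\in\mathbb{F}_Q[T]$ is a c-Wieferich prime in $\mathbb{F}_Q[T]$ if $\rho_{\mathcal{P}-1}(1)\equiv0\pmod{\mathcal{P}^2}$; it is known that this is equivalent to $F_{Q,\deg\mathcal{P}-1}\equiv0\pmod{\mathcal{P}}$, where $F_{Q,0}=1$ and $F_{Q,i}=(-1)^i+(T^{Q^i}-T)F_{Q,i-1}$. (Since $\gcd(m,mn+1)=1$, $\mathcal{P}$ remains irreducible over $\mathbb{F}_{q^{mn+1}}$.) *)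

theory Defs
  imports "HOL-Library.Cardinality" "HOL-Computational_Algebra.Polynomial" "HOL-Computational_Algebra.Polynomial_Factorial"
begin

text \<open>Carlitz module over F_Q[T], where F_Q is the finite field type 'a, Q = CARD('a).
  rho_T(X) = X^Q + T X; rho_N = sum_i c_i rho_T^(i) (composition powers) for N = sum_i c_i T^i,
  which is the unique F_Q-algebra homomorphism N to rho_N into additive polynomials.
  We only need the action on elements a of F_Q[T].\<close>

definition carlitz_T :: "'a::{finite,field} poly \<Rightarrow> 'a poly" where
  "carlitz_T a = a ^ CARD('a) + [:0, 1:] * a"

definition carlitz :: "'a::{finite,field} poly \<Rightarrow> 'a poly \<Rightarrow> 'a poly" where
  "carlitz N a = (\<Sum>i\<le>degree N. smult (coeff N i) ((carlitz_T ^^ i) a))"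

definition c_wieferich :: "'a::{finite,field} poly \<Rightarrow> bool" where
  "c_wieferich P \<longleftrightarrow> lead_coeff P = 1 \<and> irreducible P \<and> P ^ 2 dvd carlitz (P - 1) 1"

end

(* Let m = deg P and Q = q^(mn+1). Fermat's little theorem in the residue field F_q[T]/P gives
   a^(q^(mn)) = a (mod P) for every a in F_q[T]; since q = 0 in F_q[T], raising to the q-th power
   improves this to a^Q = a^q (mod P^2). Hence on F_q[T] the Carlitz modules built from X^Q + TX
   and from X^q + TX agree modulo P^2, and divisibility by P^2 is not affected by extending the
   scalars from F_q to F_Q.
   P stays irreducible over F_Q: an irreducible factor g of degree d < m would give an embedding
   of F_q[T]/P into F_Q[T]/g, so a generator of the cyclic group (F_q[T]/P)^* would have an order
   q^m - 1 dividing Q^d - 1 = q^((mn+1)d) - 1, whence m | (mn+1)d and, as gcd(m, mn+1) = 1, m | d. *)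

theory Submission
  imports Defs "Berlekamp_Zassenhaus.Distinct_Degree_Factorization"
begin

lemma polys_degree_less_eq_image_Poly:
  assumes "n > 0"
  shows "{p :: 'a::zero poly. degree p < n} = Poly ` {xs. length xs = n}"
proof (intro equalityI subsetI)
  fix p :: "'a poly" assume "p \<in> {p. degree p < n}"
  then have "length (coeffs p) \<le> n"
    using assms by (cases "p = 0") (auto simp: length_coeffs_degree)
  then show "p \<in> Poly ` {xs. length xs = n}"
    by (intro image_eqI[of _ _ "coeffs p @ replicate (n - length (coeffs p)) 0"]) simp_all
next
  fix p :: "'a poly" assume "p \<in> Poly ` {xs. length xs = n}"
  then obtain xs where "p = Poly xs" "length xs = n" by blast
  then have "degree p \<le> n - 1"
    by (intro degree_le) (auto simp: nth_default_def)
  then show "p \<in> {p. degree p < n}"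
    using assms by simp
qed

lemma inj_on_Poly_length: "inj_on Poly {xs :: 'a::zero list. length xs = n}"
proof (rule inj_onI)
  fix xs ys :: "'a list"
  assume "xs \<in> {xs. length xs = n}" "ys \<in> {xs. length xs = n}" "Poly xs = Poly ys"
  then show "xs = ys"
    by (metis (mono_tags) mem_Collect_eq coeff_Poly nth_default_nth nth_equalityI)
qed

lemma card_polys_degree_less:
  assumes "n > 0"
  shows "card {p :: 'a::{finite,zero} poly. degree p < n} = CARD('a) ^ n"
  unfolding polys_degree_less_eq_image_Poly[OF assms] card_image[OF inj_on_Poly_length]
  using card_lists_length_eq[of "UNIV :: 'a set" n] by simp

lemma finite_polys_degree_less:
  assumes "n > 0"
  shows "finite {p :: 'a::{finite,zero} poly. degree p < n}"
  using finite_lists_length_eq[of "UNIV :: 'a set" n]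
  by (simp add: polys_degree_less_eq_image_Poly[OF assms])

lemma diff_dvd_power_diff: "x - y dvd x ^ n - (y :: 'a::comm_ring_1) ^ n"
  by (simp add: power_diff_sumr2)

(* x^n - y^n = (x - y) S with S = n y^(n-1) = 0 modulo d. *)
lemma power_diff_square_dvd:
  fixes x y d :: "'a::comm_ring_1"
  assumes "of_nat n = (0::'a)" and "d dvd x - y"
  shows "d ^ 2 dvd x ^ n - y ^ n"
proof -
  let ?S = "\<Sum>i<n. y ^ (n - Suc i) * x ^ i"
  have "?S = (\<Sum>i<n. y ^ (n - Suc i) * (x ^ i - y ^ i)) + (\<Sum>i<n. y ^ (n - Suc i) * y ^ i)"
    by (simp add: right_diff_distrib sum_subtractf)
  also have "(\<Sum>i<n. y ^ (n - Suc i) * y ^ i) = of_nat n * y ^ (n - 1)"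
    by (simp flip: power_add)
  finally have "?S = (\<Sum>i<n. y ^ (n - Suc i) * (x ^ i - y ^ i))"
    using assms(1) by simp
  moreover have "d dvd (\<Sum>i<n. y ^ (n - Suc i) * (x ^ i - y ^ i))"
    using assms(2) diff_dvd_power_diff dvd_trans by (intro dvd_sum dvd_mult) blast
  ultimately have "d * d dvd (x - y) * ?S"
    using assms(2) by (simp add: mult_dvd_mono)
  then show ?thesis
    by (simp add: power2_eq_square power_diff_sumr2)
qed

lemma of_nat_card_eq_0: "of_nat CARD('a::{finite,field}) = (0::'a)"
proof -
  have "(\<Sum>x\<in>(UNIV::'a set). x) = (\<Sum>x\<in>UNIV. x + 1)"
    by (rule sum.reindex_bij_witness[of _ "\<lambda>x. x + 1" "\<lambda>x. x - 1"]) auto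
  also have "\<dots> = (\<Sum>x\<in>UNIV. x) + of_nat CARD('a)"
    by (simp add: sum.distrib)
  finally show ?thesis
    by simp
qed

lemma card_field_gt_1: "CARD('a::{finite,field}) > 1"
proof -
  have "card {0 :: 'a, 1} \<le> CARD('a)"
    by (rule card_mono) auto
  then show ?thesis
    by simp
qed

locale poly_residue_field =
  fixes f :: "'a::{finite,field} poly"
  assumes irreducible: "irreducible f"
begin

definition residue_ring :: "'a poly ring" where
  "residue_ring = \<lparr>carrier = {x. degree x < degree f}, monoid.mult = (\<lambda>x y. x * y mod f),
     one = 1, zero = 0, add = (\<lambda>x y. (x + y) mod f)\<rparr>"

lemma degree_pos: "degree f > 0"
  using irreducible irreducible_connect_field irreducible\<^sub>dD(1) by blast

lemma prime_elem: "prime_elem f"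
  using irreducible by (rule field_poly_irreducible_imp_prime)

lemma degree_mod: "degree (a mod f) < degree f"
  by (metis degree_0 degree_pos degree_mod_less' not_gr_zero)

lemma dvd_mult_residues_imp_zero:
  assumes "f dvd a * b" and "degree a < degree f" and "degree b < degree f"
  shows "a = 0 \<or> b = 0"
proof -
  have "f dvd a \<or> f dvd b"
    using assms(1) prime_elem by (simp add: prime_elem_dvd_mult_iff)
  then show ?thesis
    using assms(2,3) by (metis dvd_imp_degree_le leD)
qed

lemma residue_inverse_exists:
  assumes "degree a < degree f" and "a \<noteq> 0"
  shows "\<exists>b. degree b < degree f \<and> a * b mod f = 1"
proof -
  let ?C = "{x :: 'a poly. degree x < degree f}"
  have "inj_on (\<lambda>b. a * b mod f) ?C"
  proof (rule inj_onI)
    fix b c assume "b \<in> ?C" "c \<in> ?C" "a * b mod f = a * c mod f"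
    then have "f dvd a * (b - c)" and "degree (b - c) < degree f"
      by (auto simp: mod_eq_dvd_iff right_diff_distrib degree_diff_less)
    then show "b = c"
      using dvd_mult_residues_imp_zero assms by fastforce
  qed
  moreover have "(\<lambda>b. a * b mod f) ` ?C \<subseteq> ?C"
    using degree_mod by auto
  ultimately have "(\<lambda>b. a * b mod f) ` ?C = ?C"
    by (intro endo_inj_surj finite_polys_degree_less degree_pos)
  moreover have "1 \<in> ?C"
    using degree_pos by simp
  ultimately show ?thesis
    by (metis (no_types, lifting) imageE mem_Collect_eq)
qed

lemma field_residue_ring: "field residue_ring"
proof -
  have neg: "\<exists>y. degree y < degree f \<and> f dvd x + y" if "degree x < degree f" for x :: "'a poly"
    using that by (intro exI[of _ "- x"]) simp
  have mult: "degree (x * y mod f) < degree f" for x y :: "'a poly"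
    by (rule degree_mod)
  have zero_div: "x = 0 \<or> y = 0" if "x * y mod f = 0" "degree x < degree f" "degree y < degree f"
    for x y :: "'a poly"
    using that dvd_mult_residues_imp_zero by (simp add: dvd_eq_mod_eq_0)
  have no_inverse: "x = 0" if "degree x < degree f" "\<forall>y. x * y mod f = 1 \<longrightarrow> \<not> degree y < degree f"
    for x :: "'a poly"
    using that residue_inverse_exists by blast
  show ?thesis
    by standard (auto simp add: residue_ring_def Units_def algebra_simps degree_add_less
        mod_poly_less mod_add_eq mult_poly_add_left mod_mult_left_eq mod_mult_right_eq
        mod_eq_0_iff_dvd degree_pos neg mult zero_div dest: no_inverse)
qed

lemma finite_residue_ring: "finite (carrier residue_ring)"
  by (simp add: residue_ring_def finite_polys_degree_less degree_pos)

lemma order_units: "order (mult_of residue_ring) = CARD('a) ^ degree f - 1"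
proof -
  interpret field residue_ring by (rule field_residue_ring)
  show ?thesis
    using order_mult_of[OF finite_residue_ring] card_polys_degree_less[OF degree_pos, where 'a='a]
    by (simp add: order_def residue_ring_def)
qed

lemma residue_ring_pow: "x \<in> carrier residue_ring \<Longrightarrow> x [^]\<^bsub>residue_ring\<^esub> (k::nat) = x ^ k mod f"
proof (induction k)
  case 0
  then show ?case by (simp add: residue_ring_def mod_poly_less)
next
  case (Suc k)
  then show ?case
    by (simp add: residue_ring_def mod_mult_left_eq flip: power_Suc2)
qed

lemma residue_of_unit: "\<not> f dvd a \<Longrightarrow> a mod f \<in> carrier (mult_of residue_ring)"
  using degree_mod by (simp add: residue_ring_def dvd_eq_mod_eq_0)

lemma unit_pow_eq_one_iff:
  assumes "x \<in> carrier (mult_of residue_ring)"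
  shows "x [^]\<^bsub>mult_of residue_ring\<^esub> (k::nat) = \<one>\<^bsub>mult_of residue_ring\<^esub> \<longleftrightarrow> f dvd x ^ k - 1"
proof -
  have "x [^]\<^bsub>mult_of residue_ring\<^esub> k = x ^ k mod f"
    using assms residue_ring_pow by (simp add: nat_pow_mult_of)
  moreover have "\<one>\<^bsub>mult_of residue_ring\<^esub> = 1 mod f"
    using degree_pos by (simp add: residue_ring_def mod_poly_less)
  ultimately show ?thesis
    by (simp add: mod_eq_dvd_iff)
qed

lemma fermat_unit:
  assumes "\<not> f dvd a"
  shows "f dvd a ^ (CARD('a) ^ degree f - 1) - 1"
proof -
  interpret field residue_ring by (rule field_residue_ring)
  have unit: "a mod f \<in> carrier (mult_of residue_ring)"
    using residue_of_unit[OF assms] .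
  have "(a mod f) [^]\<^bsub>mult_of residue_ring\<^esub> order (mult_of residue_ring) = \<one>\<^bsub>mult_of residue_ring\<^esub>"
    using group.pow_order_eq_1[OF field_mult_group unit] .
  then have "f dvd (a mod f) ^ (CARD('a) ^ degree f - 1) - 1"
    by (simp only: unit_pow_eq_one_iff[OF unit] order_units)
  then show ?thesis
    by (simp add: mod_eq_dvd_iff [symmetric] power_mod)
qed

lemma fermat: "f dvd a ^ CARD('a) ^ degree f - a"
proof (cases "f dvd a")
  case True
  then show ?thesis
    using dvd_trans[OF True dvd_power[of "CARD('a) ^ degree f" a]] by (simp add: dvd_diff)
next
  case False
  have "a ^ CARD('a) ^ degree f - a = a * (a ^ (CARD('a) ^ degree f - 1) - 1)"
    by (simp add: right_diff_distrib flip: power_Suc)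
  then show ?thesis
    using fermat_unit[OF False] by simp
qed

lemma fermat_iterated: "f dvd a ^ CARD('a) ^ (degree f * k) - a"
proof (induction k)
  case (Suc k)
  let ?b = "a ^ CARD('a) ^ (degree f * k)"
  have "a ^ CARD('a) ^ (degree f * Suc k) = ?b ^ CARD('a) ^ degree f"
    by (metis mult_Suc_right add.commute power_add power_mult)
  moreover have "f dvd ?b ^ CARD('a) ^ degree f - ?b"
    by (rule fermat)
  ultimately show ?case
    using Suc dvd_add[of f "?b ^ CARD('a) ^ degree f - ?b" "?b - a"] by simp
qed simp

lemma exists_inverse_mod:
  assumes "\<not> f dvd a"
  shows "\<exists>b. f dvd a * b - 1"
proof -
  obtain b where "(a mod f) * b mod f = 1"
    using residue_inverse_exists[of "a mod f"] degree_mod assms by (auto simp: dvd_eq_mod_eq_0)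
  then have "f dvd a * b - 1"
    using degree_pos by (metis mod_eq_dvd_iff mod_mult_left_eq mod_poly_less degree_1)
  then show ?thesis ..
qed

lemma card_units_dvd_exponent:
  assumes "\<And>a. \<not> f dvd a \<Longrightarrow> f dvd a ^ u - 1"
  shows "CARD('a) ^ degree f - 1 dvd u"
proof -
  interpret field residue_ring by (rule field_residue_ring)
  obtain g where g: "g \<in> carrier (mult_of residue_ring)"
    and ord: "group.ord (mult_of residue_ring) g = order (mult_of residue_ring)"
    using finite_field_mult_group_has_gen2[OF finite_residue_ring] by blast
  have "\<not> f dvd g"
    using g by (auto simp: residue_ring_def dvd_eq_mod_eq_0 mod_poly_less)
  then have "g [^]\<^bsub>mult_of residue_ring\<^esub> u = \<one>\<^bsub>mult_of residue_ring\<^esub>"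
    using assms unit_pow_eq_one_iff[OF g] by blast
  then have "group.ord (mult_of residue_ring) g dvd u"
    using group.pow_eq_id[OF field_mult_group g] by blast
  then show ?thesis
    using ord order_units by simp
qed

lemma square_dvd_power_diff:
  "f ^ 2 dvd a ^ CARD('a) ^ (degree f * k + 1) - a ^ CARD('a)"
proof -
  have "of_nat CARD('a) = (0 :: 'a poly)"
    by (simp add: of_nat_poly of_nat_card_eq_0)
  then have "f ^ 2 dvd (a ^ CARD('a) ^ (degree f * k)) ^ CARD('a) - a ^ CARD('a)"
    using fermat_iterated by (rule power_diff_square_dvd)
  then show ?thesis
    by (simp flip: power_mult power_Suc2)
qed

end

lemma irreducible_factor_of_smaller_degree:
  fixes p :: "'a::field poly"
  assumes "degree p > 0" and "\<not> irreducible p"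
  obtains g where "irreducible g" and "g dvd p" and "degree g < degree p"
proof -
  obtain q r where q: "degree q > 0" "degree q < degree p" "p = q * r"
    using assms by (metis irreducible_connect_field irreducible\<^sub>dI not_less_iff_gr_or_eq)
  obtain g s where "irreducible g" "q = g * s"
    using irreducible_monic_factor[OF q(1)] by blast
  moreover have "degree g \<le> degree q"
    using q(1) \<open>q = g * s\<close> by (intro dvd_imp_degree_le) auto
  ultimately show ?thesis
    using that q by fastforce
qed

(* Reduction modulo a factor g of P over the larger field embeds F_q[T]/P into F_Q[T]/g. *)
lemma dvd_map_poly_irreducible_factor_imp_dvd:
  fixes P :: "'a::{finite,field} poly" and h :: "'a \<Rightarrow> 'b::field"
  assumes "field_hom h" and "irreducible P" and "g dvd map_poly h P" and "degree g > 0"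
    and "g dvd map_poly h b"
  shows "P dvd b"
proof (rule ccontr)
  interpret F: field_hom h by fact
  interpret M: map_poly_idom_hom h ..
  interpret P: poly_residue_field P by unfold_locales fact
  assume "\<not> P dvd b"
  then obtain c where "P dvd b * c - 1"
    using P.exists_inverse_mod by blast
  then have "g dvd map_poly h (b * c - 1)"
    using assms(3) M.hom_dvd dvd_trans by blast
  then have "g dvd map_poly h b * map_poly h c - 1"
    by (simp add: hom_distribs)
  moreover have "g dvd map_poly h b * map_poly h c"
    using assms(5) by (rule dvd_mult2)
  ultimately have "g dvd 1"
    using dvd_diff[of g "map_poly h b * map_poly h c" "map_poly h b * map_poly h c - 1"]
    by simp
  then show False
    using assms(4) by (simp add: poly_dvd_1)
qed

lemma irreducible_map_poly_coprime_degree: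
  fixes P :: "'a::{finite,field} poly" and h :: "'a \<Rightarrow> 'b::{finite,field}"
  assumes "field_hom h" and "irreducible P"
    and card: "CARD('b) = CARD('a) ^ k" and coprime: "gcd (degree P) k = 1"
  shows "irreducible (map_poly h P)"
proof (rule ccontr)
  interpret F: field_hom h by fact
  interpret M: map_poly_idom_hom h ..
  interpret P: poly_residue_field P by unfold_locales fact
  assume "\<not> irreducible (map_poly h P)"
  then obtain g where "irreducible g" and g_dvd: "g dvd map_poly h P"
    and less: "degree g < degree P"
    using irreducible_factor_of_smaller_degree[of "map_poly h P"] P.degree_pos by auto
  interpret g: poly_residue_field g by unfold_locales fact
  have reflect: "P dvd b" if "g dvd map_poly h b" for b
    using dvd_map_poly_irreducible_factor_imp_dvd[OF assms(1,2) g_dvd g.degree_pos that] .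
  have "P dvd b ^ (CARD('b) ^ degree g - 1) - 1" if "\<not> P dvd b" for b
  proof -
    have "g dvd map_poly h b ^ (CARD('b) ^ degree g - 1) - 1"
      using that reflect g.fermat_unit by blast
    then show ?thesis
      by (intro reflect) (simp add: hom_distribs)
  qed
  then have "CARD('a) ^ degree P - 1 dvd CARD('a) ^ (k * degree g) - 1"
    using P.card_units_dvd_exponent by (simp add: card power_mult)
  moreover have "k > 0"
    using card card_field_gt_1[where 'a='b] by (cases k) auto
  ultimately have "degree P dvd k * degree g"
    using dvd_power_minus_1_conv1[OF card_field_gt_1[where 'a='a] P.degree_pos] g.degree_pos
    by simp
  then have "degree P dvd degree g"
    using coprime by (metis coprime_dvd_mult_right_iff coprime_iff_gcd_eq_1)
  then show False
    using less g.degree_pos by (simp add: nat_dvd_not_less)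
qed

definition carlitz_step :: "nat \<Rightarrow> 'a::comm_ring_1 poly \<Rightarrow> 'a poly" where
  "carlitz_step Q a = a ^ Q + [:0, 1:] * a"

(* The Carlitz action determined by rho_T = X^Q + TX, for any exponent Q. For Q = CARD('b) and
   F_q a subfield of 'b, this is the Carlitz module of 'b[T] restricted to F_q[T]. *)
definition carlitz_with :: "nat \<Rightarrow> 'a::comm_ring_1 poly \<Rightarrow> 'a poly \<Rightarrow> 'a poly" where
  "carlitz_with Q N a = (\<Sum>i\<le>degree N. Polynomial.smult (coeff N i) ((carlitz_step Q ^^ i) a))"

lemma carlitz_eq_carlitz_with:
  fixes a :: "'a::{finite,field} poly"
  shows "carlitz N a = carlitz_with CARD('a) N a"
proof -
  have "(carlitz_T :: 'a poly \<Rightarrow> 'a poly) = carlitz_step CARD('a)"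
    by (simp add: fun_eq_iff carlitz_T_def carlitz_step_def)
  then show ?thesis
    by (simp add: carlitz_def carlitz_with_def)
qed

lemma carlitz_step_iterate_cong:
  fixes d :: "'a::comm_ring_1 poly"
  assumes "\<And>a. d dvd a ^ Q - a ^ R"
  shows "d dvd (carlitz_step Q ^^ i) a - (carlitz_step R ^^ i) a"
proof (induction i)
  case (Suc i)
  let ?x = "(carlitz_step Q ^^ i) a" and ?y = "(carlitz_step R ^^ i) a"
  have "(carlitz_step Q ^^ Suc i) a - (carlitz_step R ^^ Suc i) a
      = (?x ^ Q - ?y ^ Q) + (?y ^ Q - ?y ^ R) + [:0, 1:] * (?x - ?y)"
    by (simp add: carlitz_step_def algebra_simps)
  moreover have "d dvd ?x ^ Q - ?y ^ Q"
    using Suc.IH diff_dvd_power_diff dvd_trans by blast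
  moreover have "d dvd ?y ^ Q - ?y ^ R"
    by (rule assms)
  moreover have "d dvd [:0, 1:] * (?x - ?y)"
    using Suc.IH by (rule dvd_mult)
  ultimately show ?case
    by (metis dvd_add)
qed simp

lemma carlitz_with_cong:
  fixes d :: "'a::comm_ring_1 poly"
  assumes "\<And>a. d dvd a ^ Q - a ^ R"
  shows "d dvd carlitz_with Q N a - carlitz_with R N a"
proof -
  have "carlitz_with Q N a - carlitz_with R N a
      = (\<Sum>i\<le>degree N. Polynomial.smult (coeff N i) ((carlitz_step Q ^^ i) a - (carlitz_step R ^^ i) a))"
    by (simp add: carlitz_with_def sum_subtractf smult_diff_right)
  also have "d dvd \<dots>"
    using carlitz_step_iterate_cong[OF assms] by (intro dvd_sum dvd_smult)
  finally show ?thesis .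
qed

context field_hom
begin

lemma map_poly_dvd_iff: "map_poly hom x dvd map_poly hom y \<longleftrightarrow> x dvd y"
proof -
  interpret M: map_poly_idom_hom hom ..
  show ?thesis
    using dvd_map_poly_hom_imp_dvd M.hom_dvd by blast
qed

lemma map_poly_carlitz_step_iterate:
  "map_poly hom ((carlitz_step Q ^^ i) a) = (carlitz_step Q ^^ i) (map_poly hom a)"
proof -
  interpret M: map_poly_idom_hom hom ..
  show ?thesis
    by (induction i) (simp_all add: carlitz_step_def M.hom_add M.hom_mult M.hom_power map_poly_pCons_hom)
qed

lemma map_poly_carlitz_with:
  "map_poly hom (carlitz_with Q N a) = carlitz_with Q (map_poly hom N) (map_poly hom a)"
proof -
  interpret M: map_poly_idom_hom hom ..
  show ?thesis
    by (simp add: carlitz_with_def M.hom_sum map_poly_carlitz_step_iterate map_poly_hom_smult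
        coeff_map_poly)
qed

end

lemma square_dvd_carlitz_map_poly_iff:
  fixes P :: "'a::{finite,field} poly" and h :: "'a \<Rightarrow> 'b::{finite,field}"
  assumes "field_hom h" and "irreducible P"
    and card: "CARD('b) = CARD('a) ^ (degree P * k + 1)"
  shows "map_poly h P ^ 2 dvd carlitz (map_poly h N) (map_poly h a) \<longleftrightarrow> P ^ 2 dvd carlitz N a"
proof -
  interpret F: field_hom h by fact
  interpret M: map_poly_idom_hom h ..
  interpret P: poly_residue_field P by unfold_locales fact
  have "P ^ 2 dvd b ^ CARD('b) - b ^ CARD('a)" for b
    using P.square_dvd_power_diff[of b k] card by simp
  then have "P ^ 2 dvd carlitz_with CARD('b) N a - carlitz N a"
    unfolding carlitz_eq_carlitz_with by (rule carlitz_with_cong)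
  then have "P ^ 2 dvd carlitz N a \<longleftrightarrow> P ^ 2 dvd carlitz_with CARD('b) N a"
    by (metis dvd_add_right_iff diff_add_cancel)
  also have "\<dots> \<longleftrightarrow> map_poly h (P ^ 2) dvd map_poly h (carlitz_with CARD('b) N a)"
    by (rule F.map_poly_dvd_iff [symmetric])
  also have "\<dots> \<longleftrightarrow> map_poly h P ^ 2 dvd carlitz (map_poly h N) (map_poly h a)"
    by (simp add: carlitz_eq_carlitz_with F.map_poly_carlitz_with M.hom_power)
  finally show ?thesis
    by blast
qed

theorem theorem5p1:
  fixes P :: "'a::{finite,field} poly" and f :: "'a \<Rightarrow> 'b::{finite,field}" and n :: nat
  assumes "lead_coeff P = 1" and "irreducible P"
    and "n \<ge> 1"
    and "CARD('b) = CARD('a) ^ (degree P * n + 1)"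
    and "\<And>x y. f (x + y) = f x + f y" and "\<And>x y. f (x * y) = f x * f y" and "f 1 = 1"
  shows "c_wieferich P \<longleftrightarrow> c_wieferich (map_poly f P)"
proof -
  have "f 0 = 0"
    using assms(5)[of 0 0] by (metis add.right_neutral add_left_cancel)
  then have hom: "field_hom f"
    by unfold_locales (simp_all add: assms(5-7))
  interpret F: field_hom f by (rule hom)
  interpret M: map_poly_idom_hom f ..
  have "gcd (degree P) (degree P * n + 1) = 1"
    using gcd_add_mult[of "degree P" n 1] by (simp add: mult.commute)
  then have "irreducible (map_poly f P)"
    by (rule irreducible_map_poly_coprime_degree[OF hom assms(2,4)])
  moreover have "map_poly f P ^ 2 dvd carlitz (map_poly f P - 1) 1 \<longleftrightarrow> P ^ 2 dvd carlitz (P - 1) 1"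
    using square_dvd_carlitz_map_poly_iff[OF hom assms(2,4), of "P - 1" 1] by (simp add: M.hom_minus)
  moreover have "lead_coeff (map_poly f P) = 1"
    using assms(1,7) by simp
  ultimately show ?thesis
    using assms(1,2) by (simp add: c_wieferich_def)
qed

end
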